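(* Assume (A3) and (A4), and let $\rho\in[0,\epsilon]$. Let $x\in R\mathbb{B}$ and $s\in\partial g(x)$ with $s\ne0$, and set $$x^+=\Pi_{R\mathbb{B}}\Big(x-\frac{[g(x)+\rho]_+}{\|s\|^2}s\Big).$$ Then $$\mathrm{dist}^2(x^+,\mathcal{X}_\rho)\le\Big(1-\frac{\sigma^2}{G_g^2}\Big)\mathrm{dist}^2(x,\mathcal{X}_\rho).$$
   Context: Let $g:\mathbb{R}^d\to\mathbb{R}$ be convex with subdifferential $\partial g(x)$. Let $R>0$ and $\mathbb{B}=\{x\in\mathbb{R}^d:\|x\|\le1\}$, with $\|\cdot\|$ the Euclidean norm. Set $\mathcal{X}=\{x:g(x)\le0\}$ and assume $\mathcal{X}\subseteq R\mathbb{B}$. For $\rho\ge0$ set $\mathcal{X}_\rho=\{x:g(x)\le-\rho\}$. $\Pi_{\mathcal{Y}}$ denotes Euclidean projection onto a closed convex set $\mathcal{Y}$. Write $\mathrm{dist}(z,\mathcal{Y})=\min_{y\in\mathcal{Y}}\|z-y\|$ and $[a]_+=\max(a,0)$. Assumptions: (A3) there is $G_g>0$ with $\|s\|\le G_g$ for all $s\in\partial g(x)$ and all $x\in R\mathbb{B}$; (A4) there are $\sigma,\epsilon>0$ such that $\{x:g(x)=-\epsilon\}$ is nonempty and $\|s\|\ge\sigma$ for all $s\in\partial g(x)$ whenever $g(x)=-\epsilon$. *)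

theory Defs
  imports "HOL-Analysis.Analysis"
begin

definition subdifferential :: "('a::real_inner \<Rightarrow> real) \<Rightarrow> 'a \<Rightarrow> 'a set" where
  "subdifferential g x = {s. \<forall>y. g y \<ge> g x + inner s (y - x)}"

definition sublevel :: "('a \<Rightarrow> real) \<Rightarrow> real \<Rightarrow> 'a set" where
  "sublevel g \<rho> = {x. g x \<le> - \<rho>}"

end

theory Submission
  imports Defs
begin

text \<open>
  If x lies above the level \<rho>, the Polyak step decreases the squared distance to any point p
  of the sublevel set by the square of (g x + \<rho>) / \<parallel>s\<parallel>, by the subgradient inequality at x.
  Projecting onto the ball does not destroy this, since the nearest point of the sublevel set
  lies in the ball and projection is nonexpansive. The decrease is turned into a contraction
  by the error bound \<sigma> dist(x, X_\<rho>) \<le> g x + \<rho>, together with \<parallel>s\<parallel> \<le> G_g. The error bound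
  comes from (A4): the nearest point q of the level set {g \<le> -\<epsilon>} carries a subgradient t
  that is an outer normal of that set at q, so g x + \<epsilon> \<ge> \<parallel>t\<parallel> dist(x, q) \<ge> \<sigma> dist(x, q);
  moving from q towards x until g reaches -\<rho> scales both sides by the same factor.
\<close>

lemma closed_sublevel:
  fixes g :: "'a::euclidean_space \<Rightarrow> real"
  assumes "convex_on UNIV g"
  shows "closed (sublevel g \<rho>)"
  unfolding sublevel_def
  using convex_on_continuous[OF open_UNIV assms]
  by (intro closed_Collect_le) (auto intro: continuous_intros)

lemma convex_on_sublevel_point_on_segment:
  fixes g :: "'a::real_normed_vector \<Rightarrow> real"
  assumes "convex_on UNIV g" and "g q \<le> b" and "b < g x"
  obtains z where "g z \<le> b" and "dist x z = (g x - b) / (g x - g q) * dist x q"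
proof
  define u where "u = (b - g q) / (g x - g q)"
  have u: "0 \<le> u" "u \<le> 1" using assms(2,3) by (auto simp: u_def field_simps)
  define z where "z = (1 - u) *\<^sub>R q + u *\<^sub>R x"
  have "g z \<le> (1 - u) * g q + u * g x"
    using convex_onD[OF assms(1), of u q x] u by (simp add: z_def)
  also have "\<dots> = g q + u * (g x - g q)" by (simp add: algebra_simps)
  also have "\<dots> = b" using assms(2,3) by (simp add: u_def)
  finally show "g z \<le> b" .
  have "x - z = (1 - u) *\<^sub>R (x - q)" by (simp add: z_def algebra_simps)
  then have "dist x z = (1 - u) * dist x q" using u by (simp add: dist_norm)
  also have "1 - u = (g x - b) / (g x - g q)" using assms(2,3) by (simp add: u_def field_simps)
  finally show "dist x z = (g x - b) / (g x - g q) * dist x q" .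
qed

lemma supporting_hyperplane_epigraph_nonvertical:
  fixes g :: "'a::real_inner \<Rightarrow> real"
  assumes "(w, c0) \<noteq> 0" and epi_ge: "\<And>y r. g y \<le> r \<Longrightarrow> inner w y + c0 * r \<ge> b"
    and at_q: "inner w q + c0 * g q = b"
  shows "c0 > 0"
proof -
  have "c0 \<noteq> 0"
  proof
    assume "c0 = 0"
    then have "inner w w \<le> 0"
      using epi_ge[of "q - w" "g (q - w)"] at_q by (simp add: inner_diff_right)
    then have "w = 0" by (metis inner_gt_zero_iff not_le)
    then show False using assms(1) \<open>c0 = 0\<close> by (simp add: zero_prod_def)
  qed
  moreover have "c0 \<ge> 0" using epi_ge[of q "g q + 1"] at_q by (simp add: distrib_left)
  ultimately show ?thesis by simp
qed

text \<open>
  The subgradient comes from a hyperplane separating the epigraph of g from the region below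
  the open ball at height c; it supports the epigraph at (q, c).
\<close>
lemma subgradient_normal_to_ball:
  fixes g :: "'a::euclidean_space \<Rightarrow> real"
  assumes "convex_on UNIV g" and "D > 0" and "q \<in> cball x D"
    and above: "\<And>y. dist x y < D \<Longrightarrow> g y > c" and "g q = c"
  obtains t where "t \<in> subdifferential g q" and "\<And>y. y \<in> cball x D \<Longrightarrow> inner t (y - q) \<ge> 0"
proof -
  let ?S = "ball x D \<times> {..<c}"
  have "?S \<inter> epigraph UNIV g = {}"
    using above by (fastforce simp: epigraph_def)
  moreover have "convex ?S" by (intro convex_Times convex_ball) (simp add: convex_real_interval)
  ultimately obtain a b where "a \<noteq> 0" and low: "\<forall>p\<in>?S. inner a p \<le> b"
      and high: "\<forall>p\<in>epigraph UNIV g. inner a p \<ge> b"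
    using separating_hyperplane_sets[of ?S "epigraph UNIV g"] convex_epigraphI[OF assms(1)]
      \<open>D > 0\<close> by (fastforce simp: epigraph_def)
  obtain w c0 where a: "a = (w, c0)" by (cases a)
  have "closure ?S \<subseteq> {p. inner a p \<le> b}"
    by (rule closure_minimal) (use low closed_halfspace_le in auto)
  moreover have "(y, c) \<in> closure ?S" if "y \<in> cball x D" for y
    using that \<open>D > 0\<close> by (simp add: closure_Times)
  ultimately have ball_le: "inner w y + c0 * c \<le> b" if "y \<in> cball x D" for y
    using that by (force simp: a)
  have epi_ge: "inner w y + c0 * r \<ge> b" if "g y \<le> r" for y r
    using high that by (auto simp: epigraph_def a)
  have at_q: "inner w q + c0 * c = b"
    using ball_le[OF assms(3)] epi_ge[of q c] \<open>g q = c\<close> by simp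
  have "c0 > 0"
    using supporting_hyperplane_epigraph_nonvertical[of w c0 g b q] \<open>a \<noteq> 0\<close> epi_ge at_q \<open>g q = c\<close>
    by (simp add: a)
  show thesis
  proof
    show "- (1 / c0) *\<^sub>R w \<in> subdifferential g q"
      unfolding subdifferential_def
    proof safe
      fix y
      have "c0 * g q - inner w (y - q) \<le> c0 * g y"
        using epi_ge[of y "g y"] at_q \<open>g q = c\<close> by (simp add: inner_diff_right)
      then show "g q + inner (- (1 / c0) *\<^sub>R w) (y - q) \<le> g y"
        using \<open>c0 > 0\<close> by (simp add: field_simps)
    qed
    show "inner (- (1 / c0) *\<^sub>R w) (y - q) \<ge> 0" if "y \<in> cball x D" for y
    proof -
      have "inner w (y - q) \<le> 0" using ball_le[OF that] at_q by (simp add: inner_diff_right)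
      then show ?thesis using \<open>c0 > 0\<close> by (simp add: divide_nonpos_pos)
    qed
  qed
qed

lemma inner_ge_radius_mult_norm:
  fixes t :: "'a::real_inner"
  assumes "D \<ge> 0" and normal: "\<And>y. y \<in> cball x D \<Longrightarrow> inner t (y - q) \<ge> 0"
  shows "inner t (x - q) \<ge> D * norm t"
proof (cases "t = 0")
  case False
  have "inner t (x - (D / norm t) *\<^sub>R t - q) \<ge> 0"
    using normal[of "x - (D / norm t) *\<^sub>R t"] \<open>D \<ge> 0\<close> by (simp add: dist_norm)
  moreover have "D / norm t * inner t t = D * norm t"
    using False by (simp add: dot_square_norm power2_eq_square)
  ultimately show ?thesis by (simp add: inner_diff_right)
qed simp

lemma convex_level_set_subgradient_bound:
  fixes g :: "'a::euclidean_space \<Rightarrow> real"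
  assumes convex: "convex_on UNIV g" and "g x > c" and "{y. g y \<le> c} \<noteq> {}"
  obtains q t where "g q = c" and "t \<in> subdifferential g q" and "norm t * dist x q \<le> g x - c"
proof -
  have "sublevel g (- c) = {y. g y \<le> c}" by (simp add: sublevel_def)
  then have "closed {y. g y \<le> c}" using closed_sublevel[OF convex] by metis
  then obtain q where "q \<in> {y. g y \<le> c}" and q: "infdist x {y. g y \<le> c} = dist x q"
    using infdist_attains_inf assms(3) by blast
  then have "g q \<le> c" by simp
  have nearest: "dist x q \<le> dist x y" if "g y \<le> c" for y
    using infdist_le[of y "{y. g y \<le> c}" x] that q by simp
  define D where "D = dist x q"
  have "D > 0" using \<open>g q \<le> c\<close> \<open>g x > c\<close> by (auto simp: D_def)
  have above: "g y > c" if "dist x y < D" for y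
    using nearest[of y] that by (force simp: D_def)
  have "g q = c"
  proof (rule ccontr)
    assume "g q \<noteq> c"
    obtain z where "g z \<le> c" and z: "dist x z = (g x - c) / (g x - g q) * dist x q"
      by (rule convex_on_sublevel_point_on_segment[OF convex \<open>g q \<le> c\<close> \<open>g x > c\<close>])
    have "(g x - c) / (g x - g q) < 1" using \<open>g q \<le> c\<close> \<open>g q \<noteq> c\<close> \<open>g x > c\<close> by simp
    then have "(g x - c) / (g x - g q) * D < 1 * D" using \<open>D > 0\<close> by (rule mult_strict_right_mono)
    then have "dist x z < D" using z by (simp add: D_def)
    then show False using above \<open>g z \<le> c\<close> by force
  qed
  obtain t where t: "t \<in> subdifferential g q" and "\<And>y. y \<in> cball x D \<Longrightarrow> inner t (y - q) \<ge> 0"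
    using subgradient_normal_to_ball[OF convex \<open>D > 0\<close> _ above \<open>g q = c\<close>] by (auto simp: D_def)
  then have "D * norm t \<le> inner t (x - q)"
    using inner_ge_radius_mult_norm[of D] \<open>D > 0\<close> by auto
  also have "\<dots> \<le> g x - c"
  proof -
    have "g q + inner t (x - q) \<le> g x" using t by (simp add: subdifferential_def)
    then show ?thesis using \<open>g q = c\<close> by simp
  qed
  finally show thesis using that \<open>g q = c\<close> t by (simp add: D_def mult.commute)
qed

lemma sublevel_error_bound:
  fixes g :: "'a::euclidean_space \<Rightarrow> real"
  assumes convex: "convex_on UNIV g"
    and "\<sigma> > 0" and "{y. g y = - \<epsilon>} \<noteq> {}"
    and sharp: "\<And>y t. g y = - \<epsilon> \<Longrightarrow> t \<in> subdifferential g y \<Longrightarrow> norm t \<ge> \<sigma>"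
    and "\<rho> \<le> \<epsilon>"
  shows "\<sigma> * infdist x (sublevel g \<rho>) \<le> max (g x + \<rho>) 0"
proof (cases "g x + \<rho> \<le> 0")
  case True
  then show ?thesis by (simp add: sublevel_def)
next
  case False
  have "g x > - \<epsilon>" using False \<open>\<rho> \<le> \<epsilon>\<close> by simp
  moreover have "{y. g y \<le> - \<epsilon>} \<noteq> {}" using assms(3) by (auto intro: eq_refl)
  ultimately obtain q t where q: "g q = - \<epsilon>" and t: "t \<in> subdifferential g q"
      and bound: "norm t * dist x q \<le> g x - - \<epsilon>"
    by (rule convex_level_set_subgradient_bound[OF convex])
  have "g q \<le> - \<rho>" "- \<rho> < g x" using q False \<open>\<rho> \<le> \<epsilon>\<close> by auto
  then obtain z where "g z \<le> - \<rho>" and z: "dist x z = (g x - - \<rho>) / (g x - g q) * dist x q"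
    by (rule convex_on_sublevel_point_on_segment[OF convex])
  have "\<sigma> * dist x q \<le> g x + \<epsilon>"
    using mult_right_mono[OF sharp[OF q t] zero_le_dist[of x q]] bound by linarith
  then have "(g x + \<rho>) / (g x + \<epsilon>) * (\<sigma> * dist x q) \<le> (g x + \<rho>) / (g x + \<epsilon>) * (g x + \<epsilon>)"
    using False \<open>g x > - \<epsilon>\<close> by (intro mult_left_mono) auto
  then have "\<sigma> * dist x z \<le> g x + \<rho>"
    using \<open>g x > - \<epsilon>\<close> by (simp add: z q mult.left_commute)
  moreover have "\<sigma> * infdist x (sublevel g \<rho>) \<le> \<sigma> * dist x z"
    using \<open>g z \<le> - \<rho>\<close> \<open>\<sigma> > 0\<close> by (intro mult_left_mono infdist_le) (auto simp: sublevel_def)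
  ultimately show ?thesis by simp
qed

lemma polyak_step_dist_le:
  fixes g :: "'a::real_inner \<Rightarrow> real"
  assumes "s \<in> subdifferential g x" and "s \<noteq> 0" and "g p \<le> - \<rho>"
  shows "(dist (x - (max (g x + \<rho>) 0 / (norm s)\<^sup>2) *\<^sub>R s) p)\<^sup>2
         \<le> (dist x p)\<^sup>2 - (max (g x + \<rho>) 0)\<^sup>2 / (norm s)\<^sup>2"
proof -
  define h where "h = max (g x + \<rho>) 0"
  define \<alpha> where "\<alpha> = h / (norm s)\<^sup>2"
  have "g x + inner s (p - x) \<le> g p" using assms(1) by (simp add: subdifferential_def)
  then have descent: "h \<le> inner s (x - p)" if "h > 0"
    using assms(3) that by (auto simp: h_def max_def inner_diff_right split: if_splits)
  have "\<alpha> * h \<le> \<alpha> * inner s (x - p)"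
  proof (cases "h > 0")
    case True
    have "\<alpha> \<ge> 0" by (simp add: \<alpha>_def h_def)
    then show ?thesis using mult_left_mono[OF descent[OF True]] by blast
  next
    case False
    then show ?thesis by (simp add: \<alpha>_def h_def)
  qed
  moreover have "\<alpha> * (norm s)\<^sup>2 = h" using \<open>s \<noteq> 0\<close> by (simp add: \<alpha>_def)
  moreover have "(dist (x - \<alpha> *\<^sub>R s) p)\<^sup>2
      = (dist x p)\<^sup>2 - 2 * \<alpha> * inner s (x - p) + \<alpha> * (\<alpha> * (norm s)\<^sup>2)"
    by (simp add: dist_norm power2_norm_eq_inner inner_diff_left inner_diff_right
        inner_commute algebra_simps)
  ultimately have "(dist (x - \<alpha> *\<^sub>R s) p)\<^sup>2 \<le> (dist x p)\<^sup>2 - \<alpha> * h" by simp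
  then show ?thesis by (simp add: \<alpha>_def h_def power2_eq_square)
qed

lemma infdist_closest_point_le:
  fixes S :: "'a::euclidean_space set"
  assumes "convex S" and "closed S" and "p \<in> S" and "p \<in> X"
  shows "infdist (closest_point S y) X \<le> dist y p"
proof -
  have "dist (closest_point S y) p \<le> dist y p"
    using closest_point_lipschitz[OF assms(1,2), of y p] closest_point_self[OF assms(3)] assms(3)
    by auto
  then show ?thesis using infdist_le[OF assms(4), of "closest_point S y"] by linarith
qed

lemma polyak_step_contraction:
  fixes g :: "'a::real_inner \<Rightarrow> real"
  assumes "s \<in> subdifferential g x" and "s \<noteq> 0" and "norm s \<le> G" and "g p \<le> - \<rho>"
    and "\<sigma> \<ge> 0" and error_bound: "\<sigma> * dist x p \<le> max (g x + \<rho>) 0"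
  shows "(dist (x - (max (g x + \<rho>) 0 / (norm s)\<^sup>2) *\<^sub>R s) p)\<^sup>2 \<le> (1 - \<sigma>\<^sup>2 / G\<^sup>2) * (dist x p)\<^sup>2"
proof -
  let ?h = "max (g x + \<rho>) 0"
  have "(dist (x - (?h / (norm s)\<^sup>2) *\<^sub>R s) p)\<^sup>2 \<le> (dist x p)\<^sup>2 - ?h\<^sup>2 / (norm s)\<^sup>2"
    using polyak_step_dist_le[OF assms(1,2,4)] .
  also have "\<dots> \<le> (dist x p)\<^sup>2 - ?h\<^sup>2 / G\<^sup>2"
  proof -
    have "norm s > 0" using assms(2) by simp
    then have "G > 0" using assms(3) by linarith
    have "(norm s)\<^sup>2 \<le> G\<^sup>2" using assms(3) by (intro power_mono) auto
    moreover have "0 < G\<^sup>2 * (norm s)\<^sup>2" using \<open>G > 0\<close> \<open>norm s > 0\<close> by simp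
    ultimately have "?h\<^sup>2 / G\<^sup>2 \<le> ?h\<^sup>2 / (norm s)\<^sup>2"
      by (intro divide_left_mono) auto
    then show ?thesis by linarith
  qed
  also have "\<dots> \<le> (dist x p)\<^sup>2 - \<sigma>\<^sup>2 * (dist x p)\<^sup>2 / G\<^sup>2"
  proof -
    have "(\<sigma> * dist x p)\<^sup>2 \<le> ?h\<^sup>2"
      using error_bound \<open>\<sigma> \<ge> 0\<close> by (intro power_mono) auto
    then have "\<sigma>\<^sup>2 * (dist x p)\<^sup>2 / G\<^sup>2 \<le> ?h\<^sup>2 / G\<^sup>2"
      unfolding power_mult_distrib by (rule divide_right_mono) simp
    then show ?thesis by linarith
  qed
  also have "\<dots> = (1 - \<sigma>\<^sup>2 / G\<^sup>2) * (dist x p)\<^sup>2"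
    by (simp add: algebra_simps)
  finally show ?thesis .
qed

theorem lemma2:
  fixes g :: "'a::euclidean_space \<Rightarrow> real"
    and R G\<^sub>g \<sigma> \<epsilon> \<rho> :: real and x s :: 'a
  assumes convex: "convex_on UNIV g"
    and R_pos: "R > 0"
    and X_bounded: "sublevel g 0 \<subseteq> cball 0 R"
    and A3: "G\<^sub>g > 0" "\<And>y t. y \<in> cball 0 R \<Longrightarrow> t \<in> subdifferential g y \<Longrightarrow> norm t \<le> G\<^sub>g"
    and A4: "\<sigma> > 0" "\<epsilon> > 0" "{y. g y = - \<epsilon>} \<noteq> {}"
        "\<And>y t. g y = - \<epsilon> \<Longrightarrow> t \<in> subdifferential g y \<Longrightarrow> norm t \<ge> \<sigma>"
    and rho: "0 \<le> \<rho>" "\<rho> \<le> \<epsilon>"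
    and x: "x \<in> cball 0 R"
    and s: "s \<in> subdifferential g x" "s \<noteq> 0"
  shows "(infdist (closest_point (cball 0 R)
                     (x - (max (g x + \<rho>) 0 / (norm s)\<^sup>2) *\<^sub>R s))
                   (sublevel g \<rho>))\<^sup>2
         \<le> (1 - \<sigma>\<^sup>2 / G\<^sub>g\<^sup>2) * (infdist x (sublevel g \<rho>))\<^sup>2"
proof -
  let ?X = "sublevel g \<rho>"
  let ?y = "x - (max (g x + \<rho>) 0 / (norm s)\<^sup>2) *\<^sub>R s"
  obtain y where "g y = - \<epsilon>" using A4(3) by blast
  then have "y \<in> ?X" using rho by (simp add: sublevel_def)
  then obtain p where p: "p \<in> ?X" and d: "infdist x ?X = dist x p"
    using infdist_attains_inf[OF closed_sublevel[OF convex]] by blast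
  have "p \<in> sublevel g 0" using p rho by (simp add: sublevel_def)
  then have "p \<in> cball 0 R" using X_bounded by blast
  then have "infdist (closest_point (cball 0 R) ?y) ?X \<le> dist ?y p"
    using infdist_closest_point_le[OF convex_cball closed_cball _ p] by blast
  then have "(infdist (closest_point (cball 0 R) ?y) ?X)\<^sup>2 \<le> (dist ?y p)\<^sup>2"
    by (intro power_mono) (auto simp: infdist_nonneg)
  also have "\<dots> \<le> (1 - \<sigma>\<^sup>2 / G\<^sub>g\<^sup>2) * (dist x p)\<^sup>2"
  proof (rule polyak_step_contraction[OF s A3(2)[OF x s(1)]])
    show "g p \<le> - \<rho>" using p by (simp add: sublevel_def)
    show "\<sigma> * dist x p \<le> max (g x + \<rho>) 0"
      using sublevel_error_bound[OF convex A4(1,3,4) rho(2), where x = x] d by simp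
  qed (use A4(1) in simp)
  finally show ?thesis using d by simp
qed

end
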